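(* Let $n\ge 2$, let $y_1,\dots,y_n,x_3,\dots,x_n$ be generic complex numbers, and set $x_2=x_1-c$. Then $K_n(\bar x|\bar y)$, with $\bar x=(x_1,x_1-c,x_3,\dots,x_n)$ and $\bar y=(y_1,\dots,y_n)$, regarded as a function of $x_1$, is holomorphic at each of the points $x_1=y_k$, $k=1,\dots,n$.
   Context: Fix a constant $c\neq 0$. Define $g(x,y)=\frac{c}{x-y}$, $h(x,y)=\frac{x-y+c}{c}$, $t(x,y)=\frac{c^2}{(x-y)(x-y+c)}$, and for sets $\bar x,\bar y$, $h(\bar x,\bar y)=\prod_{j,k}h(x_j,y_k)$. For $\#\bar x=\#\bar y=n$, $K_n(\bar x|\bar y)=\Delta'_n(\bar x)\Delta_n(\bar y)h(\bar x,\bar y)\det_{1\le j,k\le n} t(x_j,y_k)$, where $\Delta_n(\bar y)=\prod_{j<k}g(y_j,y_k)$ and $\Delta'_n(\bar x)=\prod_{j>k}g(x_j,x_k)$. *)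

theory Defs
  imports "HOL-Complex_Analysis.Complex_Analysis" "Jordan_Normal_Form.Determinant"
begin

text \<open>Vectors are indexed from 0: x 0, ..., x (n-1) stand for x_1, ..., x_n of the paper.\<close>

definition gfun :: "complex \<Rightarrow> complex \<Rightarrow> complex \<Rightarrow> complex" where
  "gfun c x y = c / (x - y)"

definition hfun :: "complex \<Rightarrow> complex \<Rightarrow> complex \<Rightarrow> complex" where
  "hfun c x y = (x - y + c) / c"

definition tfun :: "complex \<Rightarrow> complex \<Rightarrow> complex \<Rightarrow> complex" where
  "tfun c x y = c^2 / ((x - y) * (x - y + c))"

definition Delta :: "complex \<Rightarrow> nat \<Rightarrow> (nat \<Rightarrow> complex) \<Rightarrow> complex" where
  "Delta c n y = (\<Prod>k<n. \<Prod>j<k. gfun c (y j) (y k))"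

definition Delta' :: "complex \<Rightarrow> nat \<Rightarrow> (nat \<Rightarrow> complex) \<Rightarrow> complex" where
  "Delta' c n x = (\<Prod>j<n. \<Prod>k<j. gfun c (x j) (x k))"

definition hset :: "complex \<Rightarrow> nat \<Rightarrow> (nat \<Rightarrow> complex) \<Rightarrow> (nat \<Rightarrow> complex) \<Rightarrow> complex" where
  "hset c n x y = (\<Prod>j<n. \<Prod>k<n. hfun c (x j) (y k))"

definition Kn :: "complex \<Rightarrow> nat \<Rightarrow> (nat \<Rightarrow> complex) \<Rightarrow> (nat \<Rightarrow> complex) \<Rightarrow> complex" where
  "Kn c n x y = Delta' c n x * Delta c n y * hset c n x y *
     det (mat n n (\<lambda>(j, k). tfun c (x j) (y k)))"

end

theory Submission imports Defs begin

text \<open>For \<open>x\<^sub>1\<close> near \<open>y\<^sub>k\<close>, the only singular entries of \<open>K\<^sub>n\<close> are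
  \<open>t(x\<^sub>1, y\<^sub>k)\<close> and \<open>t(x\<^sub>2, y\<^sub>k)\<close>, both in column \<open>k\<close> of the determinant and both
  with a simple pole at \<open>x\<^sub>1 = y\<^sub>k\<close> because \<open>x\<^sub>2 = x\<^sub>1 - c\<close>. The factor
  \<open>h(x\<^sub>2, y\<^sub>k) = (x\<^sub>1 - y\<^sub>k)/c\<close> of \<open>h(x, y)\<close> vanishes there; multiplying it into
  column \<open>k\<close> cancels both poles, and genericity keeps every remaining factor analytic.\<close>

lemma det_mult_column:
  fixes B :: "nat \<Rightarrow> nat \<Rightarrow> 'a::comm_ring_1"
  assumes k: "k < n"
  shows "det (mat n n (\<lambda>(i, j). if j = k then a * B i j else B i j))
       = a * det (mat n n (\<lambda>(i, j). B i j))"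
proof -
  let ?M = "mat n n (\<lambda>(i, j). B i j)"
  have M: "?M \<in> carrier_mat n n" by simp
  have "mat n n (\<lambda>(i, j). if j = k then a * B i j else B i j)
      = transpose_mat (multrow k a (transpose_mat ?M))"
    by (rule eq_matI) auto
  then have "det (mat n n (\<lambda>(i, j). if j = k then a * B i j else B i j))
      = det (multrow k a (transpose_mat ?M))"
    using det_transpose[of "multrow k a (transpose_mat ?M)" n] by simp
  also have "\<dots> = a * det (transpose_mat ?M)" by (rule det_multrow[OF k]) simp
  also have "\<dots> = a * det ?M" using det_transpose[OF M] by simp
  finally show ?thesis .
qed

lemma analytic_on_det:
  assumes "\<And>i j. i < n \<Longrightarrow> j < n \<Longrightarrow> (\<lambda>z. F z i j) analytic_on S"
  shows "(\<lambda>z. det (mat n n (\<lambda>(i, j). F z i j))) analytic_on S"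
proof -
  have perm_lt: "p i < n" if "p permutes {0..<n}" "i < n" for p i
    using permutes_in_image[OF that(1)] that(2) by simp
  have "(\<lambda>z. det (mat n n (\<lambda>(i, j). F z i j)))
      = (\<lambda>z. \<Sum>p\<in>{p. p permutes {0..<n}}. signof p * (\<Prod>i = 0..<n. F z i (p i)))"
    by (auto simp: det_def'[of _ n] perm_lt intro!: sum.cong prod.cong)
  then show ?thesis
    using assms perm_lt by (auto intro!: analytic_intros)
qed

lemma prod_prod_pull_out:
  fixes F :: "'b \<Rightarrow> 'c \<Rightarrow> 'a::comm_monoid_mult"
  assumes "finite A" "finite B" "j0 \<in> A" "l0 \<in> B"
  shows "(\<Prod>j\<in>A. \<Prod>l\<in>B. F j l)
       = F j0 l0 * (\<Prod>j\<in>A. \<Prod>l\<in>B. if j = j0 \<and> l = l0 then 1 else F j l)"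
proof -
  have pair: "(j0, l0) \<in> A \<times> B" using assms by simp
  have split: "(\<Prod>j\<in>A. \<Prod>l\<in>B. G j l) = G j0 l0 * (\<Prod>(j, l)\<in>A \<times> B - {(j0, l0)}. G j l)"
    for G :: "_ \<Rightarrow> _ \<Rightarrow> 'a"
    using assms by (simp add: prod.cartesian_product prod.remove[OF _ pair])
  have "(\<Prod>(j, l)\<in>A \<times> B - {(j0, l0)}. if j = j0 \<and> l = l0 then 1 else F j l)
      = (\<Prod>(j, l)\<in>A \<times> B - {(j0, l0)}. F j l)"
    by (rule prod.cong) (auto split: prod.splits)
  then show ?thesis
    using split[of F] split[of "\<lambda>j l. if j = j0 \<and> l = l0 then 1 else F j l"] by simp
qed

lemma Kn_scale_column:
  assumes "j0 < n" "k < n"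
  shows "Kn c n x y = Delta' c n x * Delta c n y
      * (\<Prod>j<n. \<Prod>l<n. if j = j0 \<and> l = k then 1 else hfun c (x j) (y l))
      * det (mat n n (\<lambda>(i, l). if l = k then hfun c (x j0) (y k) * tfun c (x i) (y l)
                               else tfun c (x i) (y l)))"
proof -
  have "hset c n x y = hfun c (x j0) (y k)
      * (\<Prod>j<n. \<Prod>l<n. if j = j0 \<and> l = k then 1 else hfun c (x j) (y l))"
    unfolding hset_def using assms by (intro prod_prod_pull_out) auto
  then show ?thesis
    unfolding Kn_def
    using det_mult_column[OF \<open>k < n\<close>, of "hfun c (x j0) (y k)" "\<lambda>i l. tfun c (x i) (y l)"]
    by (simp add: mult_ac)
qed

definition removable_at :: "(complex \<Rightarrow> complex) \<Rightarrow> complex \<Rightarrow> bool" where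
  "removable_at f a \<longleftrightarrow> (\<exists>g. g analytic_on {a} \<and> (\<forall>\<^sub>F z in at a. f z = g z))"

lemma analytic_on_imp_removable_at: "f analytic_on {a} \<Longrightarrow> removable_at f a"
  unfolding removable_at_def by auto

lemma removable_at_cong:
  assumes "removable_at g a" "\<forall>\<^sub>F z in at a. f z = g z"
  shows "removable_at f a"
proof -
  obtain h where "h analytic_on {a}" "\<forall>\<^sub>F z in at a. g z = h z"
    using assms(1) unfolding removable_at_def by blast
  moreover from assms(2) this(2) have "\<forall>\<^sub>F z in at a. f z = h z"
    by eventually_elim simp
  ultimately show ?thesis
    unfolding removable_at_def by blast
qed

lemma removable_at_mult:
  assumes "removable_at f a" "removable_at g a"
  shows "removable_at (\<lambda>z. f z * g z) a"
proof -
  obtain f' g' where "f' analytic_on {a}" "g' analytic_on {a}"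
    and "\<forall>\<^sub>F z in at a. f z = f' z" "\<forall>\<^sub>F z in at a. g z = g' z"
    using assms unfolding removable_at_def by blast
  then show ?thesis
    unfolding removable_at_def
    by (intro exI[of _ "\<lambda>z. f' z * g' z"]) (auto intro: analytic_intros elim: eventually_elim2)
qed

lemma removable_at_det:
  assumes "\<And>i j. i < n \<Longrightarrow> j < n \<Longrightarrow> removable_at (\<lambda>z. F z i j) a"
  shows "removable_at (\<lambda>z. det (mat n n (\<lambda>(i, j). F z i j))) a"
proof -
  obtain G where G: "\<And>i j. i < n \<Longrightarrow> j < n \<Longrightarrow>
      (\<lambda>z. G i j z) analytic_on {a} \<and> (\<forall>\<^sub>F z in at a. F z i j = G i j z)"
    using assms unfolding removable_at_def by metis
  have "\<forall>\<^sub>F z in at a. \<forall>(i, j)\<in>{..<n} \<times> {..<n}. F z i j = G i j z"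
    using G by (intro eventually_ball_finite) auto
  then have "\<forall>\<^sub>F z in at a. det (mat n n (\<lambda>(i, j). F z i j)) = det (mat n n (\<lambda>(i, j). G i j z))"
    by eventually_elim (auto intro!: arg_cong[of _ _ det] eq_matI)
  moreover have "(\<lambda>z. det (mat n n (\<lambda>(i, j). G i j z))) analytic_on {a}"
    using G by (intro analytic_on_det) auto
  ultimately show ?thesis
    unfolding removable_at_def by blast
qed

lemma analytic_on_gfun:
  assumes "f analytic_on {a}" "g analytic_on {a}" "f a \<noteq> g a"
  shows "(\<lambda>z. gfun c (f z) (g z)) analytic_on {a}"
  unfolding gfun_def by (intro analytic_intros) (use assms in auto)

lemma analytic_on_hfun:
  assumes "f analytic_on {a}" "g analytic_on {a}"
  shows "(\<lambda>z. hfun c (f z) (g z)) analytic_on {a}"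
proof -
  have "(\<lambda>z. f z - g z + c) analytic_on {a}"
    using assms by (intro analytic_intros)
  then show ?thesis
    unfolding hfun_def divide_inverse by (intro analytic_on_mult analytic_on_const)
qed

lemma analytic_on_tfun:
  assumes "f analytic_on {a}" "g analytic_on {a}" "f a \<noteq> g a" "f a - g a + c \<noteq> 0"
  shows "(\<lambda>z. tfun c (f z) (g z)) analytic_on {a}"
  unfolding tfun_def by (intro analytic_intros) (use assms in auto)

lemma removable_at_hfun_tfun:
  assumes "c \<noteq> 0"
  shows "removable_at (\<lambda>z. hfun c (z - c) a * tfun c z a) a"
    and "removable_at (\<lambda>z. hfun c (z - c) a * tfun c (z - c) a) a"
proof -
  have "hfun c (z - c) a * tfun c z a = c / (z - a + c)"
    and "hfun c (z - c) a * tfun c (z - c) a = c / (z - a - c)" if "z \<noteq> a" for z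
    using assms that by (auto simp: hfun_def tfun_def power2_eq_square divide_simps)
  then have "\<forall>\<^sub>F z in at a. hfun c (z - c) a * tfun c z a = c / (z - a + c)"
    and "\<forall>\<^sub>F z in at a. hfun c (z - c) a * tfun c (z - c) a = c / (z - a - c)"
    by (auto simp: eventually_at_filter)
  moreover have "(\<lambda>z. c / (z - a + c)) analytic_on {a}" "(\<lambda>z. c / (z - a - c)) analytic_on {a}"
    using assms by (auto intro!: analytic_intros)
  ultimately show "removable_at (\<lambda>z. hfun c (z - c) a * tfun c z a) a"
    and "removable_at (\<lambda>z. hfun c (z - c) a * tfun c (z - c) a) a"
    by (auto intro: removable_at_cong analytic_on_imp_removable_at)
qed

lemma removable_at_Kn:
  fixes c :: complex and n k :: nat and x y :: "nat \<Rightarrow> complex"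
  defines "p \<equiv> x(0 := y k, 1 := y k - c)"
  assumes c: "c \<noteq> 0" and n: "1 < n" and k: "k < n"
    and distinct: "\<And>i j. i < j \<Longrightarrow> j < n \<Longrightarrow> p j \<noteq> p i"
    and apart: "\<And>i l. i < n \<Longrightarrow> l < n \<Longrightarrow> l \<noteq> k \<or> 2 \<le> i \<Longrightarrow>
                  p i \<noteq> y l \<and> p i - y l + c \<noteq> 0"
  shows "removable_at (\<lambda>z. Kn c n (x(0 := z, 1 := z - c)) y) (y k)"
proof -
  define X where "X z = x(0 := z, 1 := z - c)" for z
  have X_at: "X (y k) = p" by (simp add: X_def p_def)
  have X_analytic: "(\<lambda>z. X z i) analytic_on {y k}" for i
    by (cases "i = 0"; cases "i = 1") (auto simp: X_def intro!: analytic_intros)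
  have Delta': "(\<lambda>z. Delta' c n (X z)) analytic_on {y k}"
    unfolding Delta'_def
    by (intro analytic_on_prod analytic_on_gfun X_analytic) (auto simp: X_at distinct)
  have H: "(\<lambda>z. \<Prod>j<n. \<Prod>l<n. if j = 1 \<and> l = k then 1 else hfun c (X z j) (y l)) analytic_on {y k}"
  proof (intro analytic_on_prod)
    fix j l
    show "(\<lambda>z. if j = 1 \<and> l = k then 1 else hfun c (X z j) (y l)) analytic_on {y k}"
      by (cases "j = 1 \<and> l = k") (auto intro!: analytic_on_hfun X_analytic)
  qed
  have column: "removable_at (\<lambda>z. if l = k then hfun c (X z 1) (y k) * tfun c (X z i) (y l)
                                    else tfun c (X z i) (y l)) (y k)"
    if "i < n" "l < n" for i l
  proof (cases "l = k")
    case False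
    then show ?thesis
      using apart[OF that] X_at
      by (auto intro!: analytic_on_imp_removable_at analytic_on_tfun X_analytic analytic_intros)
  next
    case True
    consider "i = 0" | "i = 1" | "2 \<le> i" by linarith
    then show ?thesis
    proof cases
      case 3
      then show ?thesis
        using True apart[OF that] X_at
        by (auto intro!: analytic_on_imp_removable_at analytic_on_tfun analytic_on_hfun
            X_analytic analytic_intros)
    qed (use True c removable_at_hfun_tfun in \<open>auto simp: X_def\<close>)
  qed
  show ?thesis
    unfolding X_def[symmetric] Kn_scale_column[OF n k]
    by (intro removable_at_mult removable_at_det analytic_on_imp_removable_at Delta' H column)
      auto
qed

lemma nonzero_shifts_if_avoids_small_multiples:
  fixes u c :: complex
  assumes "\<And>m::int. \<bar>m\<bar> \<le> 2 \<Longrightarrow> u \<noteq> of_int m * c"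
  shows "u \<noteq> 0" "u + c \<noteq> 0" "u - c \<noteq> 0"
  using assms[of 0] assms[of "-1"] assms[of 1] by (auto simp: add_eq_0_iff2)

theorem propositionA1:
  fixes c :: complex and n :: nat and x y :: "nat \<Rightarrow> complex"
  assumes c: "c \<noteq> 0"
    and n: "n \<ge> 2"
    and gen_y: "\<forall>k<n. \<forall>l<n. k \<noteq> l \<longrightarrow>
                 (\<forall>m::int. \<bar>m\<bar> \<le> 2 \<longrightarrow> y k - y l \<noteq> of_int m * c)"
    and gen_x: "\<forall>j<n. \<forall>l<n. 2 \<le> j \<longrightarrow> 2 \<le> l \<longrightarrow> j \<noteq> l \<longrightarrow>
                 (\<forall>m::int. \<bar>m\<bar> \<le> 2 \<longrightarrow> x j - x l \<noteq> of_int m * c)"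
    and gen_xy: "\<forall>j<n. \<forall>k<n. 2 \<le> j \<longrightarrow>
                 (\<forall>m::int. \<bar>m\<bar> \<le> 2 \<longrightarrow> x j - y k \<noteq> of_int m * c)"
  shows "\<forall>k<n. \<exists>f. f analytic_on {y k} \<and>
           (\<forall>\<^sub>F z in at (y k). Kn c n (x(0 := z, 1 := z - c)) y = f z)"
proof (intro allI impI)
  fix k assume k: "k < n"
  note shifts = nonzero_shifts_if_avoids_small_multiples
  have yy: "y k - y l \<noteq> 0" "y k - y l + c \<noteq> 0" "y k - y l - c \<noteq> 0" if "l < n" "l \<noteq> k" for l
    using shifts[OF gen_y[rule_format, OF k that(1)]] that by auto
  have xy: "x j - y l \<noteq> 0" "x j - y l + c \<noteq> 0" if "j < n" "2 \<le> j" "l < n" for j l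
    using shifts[OF gen_xy[rule_format, OF that(1,3,2)]] by auto
  have xx: "x j - x i \<noteq> 0" if "i < n" "j < n" "2 \<le> i" "2 \<le> j" "i \<noteq> j" for i j
    using shifts[OF gen_x[rule_format, OF that(2,1,4,3)]] that by auto
  have "removable_at (\<lambda>z. Kn c n (x(0 := z, 1 := z - c)) y) (y k)"
  proof (rule removable_at_Kn[OF c _ k])
    show "1 < n" using n by simp
  next
    fix i j assume "i < j" "j < n"
    then show "(x(0 := y k, 1 := y k - c)) j \<noteq> (x(0 := y k, 1 := y k - c)) i"
      using c xy[of j k] xx[of i j] k by (auto simp: algebra_simps)
  next
    fix i l assume "i < n" "l < n" "l \<noteq> k \<or> 2 \<le> i"
    then show "(x(0 := y k, 1 := y k - c)) i \<noteq> y l \<and> (x(0 := y k, 1 := y k - c)) i - y l + c \<noteq> 0"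
      using yy[of l] xy[of i l] by (auto simp: algebra_simps)
  qed
  then show "\<exists>f. f analytic_on {y k} \<and> (\<forall>\<^sub>F z in at (y k). Kn c n (x(0 := z, 1 := z - c)) y = f z)"
    unfolding removable_at_def .
qed

end
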